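(* Let $G_H$ be a finite undirected multigraph (parallel edges allowed, no self-loops) with vertex set $V$ and edge set partitioned as $E = S \sqcup S^c$ into secure edges $S$ and insecure edges $S^c$, and let $0 < p_J^{S^c} \le p_J^{S} \le p_I$ be real costs satisfying $p_J^{S^c} < p_I/2$ and $p_J^{S} + p_J^{S^c} < p_I$. Give weight $p_J^{S}$ to secure edges and $p_J^{S^c}$ to insecure edges, and let $C^*$ be a cut of minimum weight among cuts containing at least one insecure edge. Then the attack $(C^*, J, I)$ with $I = \{e\}$ for some insecure edge $e \in C^*$ and $J = C^*\setminus \{e\}$ (all other secure and insecure edges of $C^*$ jammed) is an optimal detectable generalized attack in $G_H$.
   Context: For a nonempty proper subset $U \subsetneq V$, the cut $\delta(U)$ is the set of edges with exactly one endpoint in $U$; a cut of $G_H$ is any set of this form. The costs are: $p_J^{S^c}$ per jammed insecure edge, $p_J^S$ per jammed secure edge, $p_I$ per insecure edge with injected data. A generalized attack is a triple $(C,J,I)$ where $C$ is a cut, $J \subseteq C$ is the set of jammed edges, and $I \subseteq (C \cap S^c)\setminus J$ is a nonempty set of injected edges; its cost is $p_J^{S}|J\cap S| + p_J^{S^c}|J \cap S^c| + p_I |I|$. The attack is detectable if $2|I| > |C \setminus J|$ (the injected edges form a strict majority of the non-jammed edges of the cut). An optimal detectable generalized attack is one of minimum cost among all detectable generalized attacks. *)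

theory Defs
  imports Main "HOL.Real"
begin

text \<open>Parallel edges are
  distinct edge identifiers with the same endpoints.\<close>

definition multigraph :: "'v set \<Rightarrow> 'e set \<Rightarrow> ('e \<Rightarrow> 'v) \<Rightarrow> ('e \<Rightarrow> 'v) \<Rightarrow> bool" where
  "multigraph V E src tgt \<longleftrightarrow> finite V \<and> finite E \<and>
     (\<forall>e\<in>E. src e \<in> V \<and> tgt e \<in> V \<and> src e \<noteq> tgt e)"

definition delta :: "'e set \<Rightarrow> ('e \<Rightarrow> 'v) \<Rightarrow> ('e \<Rightarrow> 'v) \<Rightarrow> 'v set \<Rightarrow> 'e set" where
  "delta E src tgt U = {e \<in> E. (src e \<in> U) \<noteq> (tgt e \<in> U)}"

definition is_cut :: "'v set \<Rightarrow> 'e set \<Rightarrow> ('e \<Rightarrow> 'v) \<Rightarrow> ('e \<Rightarrow> 'v) \<Rightarrow> 'e set \<Rightarrow> bool" where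
  "is_cut V E src tgt C \<longleftrightarrow> (\<exists>U. U \<noteq> {} \<and> U \<subset> V \<and> C = delta E src tgt U)"

definition gen_attack ::
  "'v set \<Rightarrow> 'e set \<Rightarrow> ('e \<Rightarrow> 'v) \<Rightarrow> ('e \<Rightarrow> 'v) \<Rightarrow> 'e set \<Rightarrow> 'e set \<Rightarrow> 'e set \<Rightarrow> 'e set \<Rightarrow> bool" where
  "gen_attack V E src tgt S C J I \<longleftrightarrow> is_cut V E src tgt C \<and> J \<subseteq> C \<and>
     I \<subseteq> (C \<inter> (E - S)) - J \<and> I \<noteq> {}"

definition attack_cost :: "real \<Rightarrow> real \<Rightarrow> real \<Rightarrow> 'e set \<Rightarrow> 'e set \<Rightarrow> 'e set \<Rightarrow> 'e set \<Rightarrow> real" where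
  "attack_cost pJS pJSc pI E S J I =
     pJS * real (card (J \<inter> S)) + pJSc * real (card (J \<inter> (E - S))) + pI * real (card I)"

definition detectable :: "'e set \<Rightarrow> 'e set \<Rightarrow> 'e set \<Rightarrow> bool" where
  "detectable C J I \<longleftrightarrow> 2 * card I > card (C - J)"

definition optimal_detectable_attack ::
  "'v set \<Rightarrow> 'e set \<Rightarrow> ('e \<Rightarrow> 'v) \<Rightarrow> ('e \<Rightarrow> 'v) \<Rightarrow> 'e set \<Rightarrow> real \<Rightarrow> real \<Rightarrow> real
    \<Rightarrow> 'e set \<Rightarrow> 'e set \<Rightarrow> 'e set \<Rightarrow> bool" where
  "optimal_detectable_attack V E src tgt S pJS pJSc pI C J I \<longleftrightarrow>
     gen_attack V E src tgt S C J I \<and> detectable C J I \<and>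
     (\<forall>C' J' I'. gen_attack V E src tgt S C' J' I' \<and> detectable C' J' I' \<longrightarrow>
        attack_cost pJS pJSc pI E S J I \<le> attack_cost pJS pJSc pI E S J' I')"

definition cut_weight :: "real \<Rightarrow> real \<Rightarrow> 'e set \<Rightarrow> 'e set \<Rightarrow> 'e set \<Rightarrow> real" where
  "cut_weight pJS pJSc E S C = pJS * real (card (C \<inter> S)) + pJSc * real (card (C \<inter> (E - S)))"

end

theory Submission
  imports Defs
begin

text \<open>Write w for the weight of an edge set. An attack (C, J, I) costs w(J) + p_I |I|, and
  the attack of the theorem costs w(C*) - p_J^{S^c} + p_I. Conversely, for a detectable attack
  with k = |I| injected edges, the remaining edges R = C - J - I number at most k - 1, so
  w(C) = w(J) + p_J^{S^c} k + w(R) \<le> w(J) + p_J^{S^c} k + p_J^S (k - 1); hence its cost is at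
  least w(C) - p_J^{S^c} + p_I + (k - 1)(p_I - p_J^S - p_J^{S^c}) \<ge> w(C*) - p_J^{S^c} + p_I,
  because C contains the insecure edges I and C* is a minimum weight such cut.\<close>

lemma cut_subset_edges: "is_cut V E src tgt C \<Longrightarrow> C \<subseteq> E"
  unfolding is_cut_def delta_def by auto

lemma cut_weight_Un_disjoint:
  assumes "finite A" "finite B" "A \<inter> B = {}"
  shows "cut_weight pJS pJSc E S (A \<union> B) = cut_weight pJS pJSc E S A + cut_weight pJS pJSc E S B"
proof -
  have "card ((A \<union> B) \<inter> T) = card (A \<inter> T) + card (B \<inter> T)" for T
    using assms by (simp add: Int_Un_distrib2 card_Un_disjoint disjoint_iff)
  then show ?thesis
    unfolding cut_weight_def by (simp add: algebra_simps)
qed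

lemma cut_weight_insecure:
  assumes "A \<subseteq> E - S"
  shows "cut_weight pJS pJSc E S A = pJSc * real (card A)"
proof -
  from assms have "A \<inter> S = {}" "A \<inter> (E - S) = A" by auto
  then show ?thesis unfolding cut_weight_def by simp
qed

lemma cut_weight_le_card:
  assumes "finite A" "0 \<le> pJS" "pJSc \<le> pJS"
  shows "cut_weight pJS pJSc E S A \<le> pJS * real (card A)"
proof -
  have "card (A \<inter> S) + card (A \<inter> (E - S)) = card ((A \<inter> S) \<union> (A \<inter> (E - S)))"
    using assms(1) by (intro card_Un_disjoint[symmetric]) auto
  also have "\<dots> \<le> card A"
    using assms(1) by (intro card_mono) auto
  finally have "real (card (A \<inter> S)) + real (card (A \<inter> (E - S))) \<le> real (card A)"
    by linarith
  moreover have "pJSc * real (card (A \<inter> (E - S))) \<le> pJS * real (card (A \<inter> (E - S)))"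
    using assms(3) by (simp add: mult_right_mono)
  ultimately show ?thesis
    unfolding cut_weight_def using assms(2)
    by (smt (verit) distrib_left mult_left_mono)
qed

lemma attack_cost_eq_cut_weight:
  "attack_cost pJS pJSc pI E S J I = cut_weight pJS pJSc E S J + pI * real (card I)"
  unfolding attack_cost_def cut_weight_def ..

lemma attack_cost_single_injection:
  assumes "finite C" "e \<in> C \<inter> (E - S)"
  shows "attack_cost pJS pJSc pI E S (C - {e}) {e} = cut_weight pJS pJSc E S C - pJSc + pI"
proof -
  have "cut_weight pJS pJSc E S C = cut_weight pJS pJSc E S (C - {e}) + cut_weight pJS pJSc E S {e}"
    using assms cut_weight_Un_disjoint[of "C - {e}" "{e}"] by (simp add: insert_absorb)
  moreover have "cut_weight pJS pJSc E S {e} = pJSc"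
    using assms(2) cut_weight_insecure[of "{e}"] by simp
  ultimately show ?thesis
    by (simp add: attack_cost_eq_cut_weight)
qed

lemma single_injection_attack_detectable:
  assumes "is_cut V E src tgt C" "e \<in> C \<inter> (E - S)"
  shows "gen_attack V E src tgt S C (C - {e}) {e}" and "detectable C (C - {e}) {e}"
  using assms unfolding gen_attack_def detectable_def by (auto simp: Diff_Diff_Int Int_absorb1)

lemma detectable_attack_cost_ge:
  assumes "finite E" "gen_attack V E src tgt S C J I" "detectable C J I"
    and "0 \<le> pJSc" "pJSc \<le> pJS" "pJS + pJSc \<le> pI"
  shows "cut_weight pJS pJSc E S C - pJSc + pI \<le> attack_cost pJS pJSc pI E S J I"
proof -
  have "C \<subseteq> E" and JC: "J \<subseteq> C" and IC: "I \<subseteq> C \<inter> (E - S) - J" and "I \<noteq> {}"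
    using assms(2) cut_subset_edges unfolding gen_attack_def by blast+
  then have finC: "finite C" using assms(1) finite_subset by blast
  define k where "k = card I"
  define R where "R = C - J - I"
  have finJ: "finite J" and finI: "finite I" and finR: "finite R"
    using finC JC IC unfolding R_def by (auto intro: finite_subset)
  have "k \<ge> 1"
    using \<open>I \<noteq> {}\<close> finI unfolding k_def by (simp add: Suc_leI card_gt_0_iff)
  have "C - J = I \<union> R" "I \<inter> R = {}"
    using IC unfolding R_def by auto
  then have "card R + 1 \<le> k"
    using assms(3) finI finR unfolding detectable_def k_def by (simp add: card_Un_disjoint)
  then have R_weight: "cut_weight pJS pJSc E S R \<le> pJS * (real k - 1)"
    using cut_weight_le_card[OF finR] assms(4,5)
    by (smt (verit, ccfv_SIG) mult_left_mono of_nat_1 of_nat_add of_nat_mono)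
  have "C = J \<union> (I \<union> R)" "J \<inter> (I \<union> R) = {}"
    using JC IC unfolding R_def by auto
  moreover have "cut_weight pJS pJSc E S I = pJSc * real k"
    using IC unfolding k_def by (intro cut_weight_insecure) auto
  ultimately have "cut_weight pJS pJSc E S C
      = cut_weight pJS pJSc E S J + pJSc * real k + cut_weight pJS pJSc E S R"
    using finJ finI finR \<open>I \<inter> R = {}\<close> by (simp add: cut_weight_Un_disjoint)
  moreover have "0 \<le> (real k - 1) * (pI - pJS - pJSc)"
    using \<open>k \<ge> 1\<close> assms(6) by simp
  ultimately show ?thesis
    using R_weight by (simp add: attack_cost_eq_cut_weight k_def algebra_simps)
qed

theorem theorem7:
  fixes V :: "'v set" and E S :: "'e set" and src tgt :: "'e \<Rightarrow> 'v"
    and pJS pJSc pI :: real and Cstar :: "'e set" and e :: 'e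
  assumes "multigraph V E src tgt"
    and "S \<subseteq> E"
    and "0 < pJSc" and "pJSc \<le> pJS" and "pJS \<le> pI"
    and "pJSc < pI / 2" and "pJS + pJSc < pI"
    and "is_cut V E src tgt Cstar" and "Cstar \<inter> (E - S) \<noteq> {}"
    and "\<forall>C. is_cut V E src tgt C \<and> C \<inter> (E - S) \<noteq> {} \<longrightarrow>
           cut_weight pJS pJSc E S Cstar \<le> cut_weight pJS pJSc E S C"
    and "e \<in> Cstar \<inter> (E - S)"
  shows "optimal_detectable_attack V E src tgt S pJS pJSc pI Cstar (Cstar - {e}) {e}"
proof -
  have finE: "finite E" using assms(1) unfolding multigraph_def by auto
  then have "finite Cstar" using cut_subset_edges[OF assms(8)] finite_subset by blast
  have "attack_cost pJS pJSc pI E S (Cstar - {e}) {e} \<le> attack_cost pJS pJSc pI E S J I"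
    if attack: "gen_attack V E src tgt S C J I" and "detectable C J I" for C J I
  proof -
    have "is_cut V E src tgt C" "C \<inter> (E - S) \<noteq> {}"
      using attack unfolding gen_attack_def by auto
    then have "cut_weight pJS pJSc E S Cstar \<le> cut_weight pJS pJSc E S C"
      using assms(10) by blast
    then show ?thesis
      using attack_cost_single_injection[OF \<open>finite Cstar\<close> assms(11), of pJS pJSc pI]
        detectable_attack_cost_ge[OF finE that less_imp_le[OF assms(3)] assms(4)
          less_imp_le[OF assms(7)]]
      by linarith
  qed
  then show ?thesis
    unfolding optimal_detectable_attack_def
    using single_injection_attack_detectable[OF assms(8,11)] by blast
qed

end
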